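(* Let $G$ be any simple graph on $n$ vertices with chromatic number $k=\chi(G)$. Then $$\varepsilon(G)\ge\frac{n!}{k^{\,n-k}\,k!}.$$
   Context: For an undirected simple graph $G=(V,E)$, $\varepsilon(G)$ denotes the maximum, over all acyclic orientations of $E$, of the number of linear extensions of the partial order induced on $V$ (where $u<v$ iff there is a directed path from $u$ to $v$; a linear extension of a poset on an $n$-element set is an order-preserving bijection onto $[n]$). *)

theory Defs
  imports Complex_Main "HOL-Library.FuncSet"
begin

text \<open>A finite simple graph: finite vertex set V, edge relation E that is
symmetric, irreflexive and contained in V x V (each undirected edge {u,v}
is represented by both pairs (u,v) and (v,u)).\<close>

definition simple_graph :: "'a set \<Rightarrow> ('a \<times> 'a) set \<Rightarrow> bool" where
  "simple_graph V E \<longleftrightarrow> finite V \<and> E \<subseteq> V \<times> V \<and> sym E \<and> irrefl E"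

definition proper_colouring :: "'a set \<Rightarrow> ('a \<times> 'a) set \<Rightarrow> nat \<Rightarrow> ('a \<Rightarrow> nat) \<Rightarrow> bool" where
  "proper_colouring V E k c \<longleftrightarrow> (\<forall>v\<in>V. c v < k) \<and> (\<forall>(u,v)\<in>E. c u \<noteq> c v)"

definition chromatic_number :: "'a set \<Rightarrow> ('a \<times> 'a) set \<Rightarrow> nat" where
  "chromatic_number V E = (LEAST k. \<exists>c. proper_colouring V E k c)"

definition acyclic_orientation :: "('a \<times> 'a) set \<Rightarrow> ('a \<times> 'a) set \<Rightarrow> bool" where
  "acyclic_orientation E D \<longleftrightarrow> D \<subseteq> E \<and>
     (\<forall>(u,v)\<in>E. ((u,v) \<in> D) \<noteq> ((v,u) \<in> D)) \<and> acyclic D"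

definition linear_extensions :: "'a set \<Rightarrow> ('a \<times> 'a) set \<Rightarrow> ('a \<Rightarrow> nat) set" where
  "linear_extensions V D =
     {f \<in> extensional V. bij_betw f V {1..card V} \<and>
        (\<forall>u\<in>V. \<forall>v\<in>V. (u,v) \<in> D\<^sup>+ \<longrightarrow> f u < f v)}"

definition eps :: "'a set \<Rightarrow> ('a \<times> 'a) set \<Rightarrow> nat" where
  "eps V E = Max {card (linear_extensions V D) | D. acyclic_orientation E D}"

end

theory Submission
  imports Defs
begin

(* Take a proper colouring c with k colours; by minimality of k every colour class
   C_0, ..., C_(k-1) is nonempty.  Orienting every edge from the smaller to the larger
   colour gives an acyclic orientation D, and every bijection V -> {1..n} that increases
   along the colour order (a "colour-sorted labelling") is a linear extension of D.

   Then a purely arithmetic lemma shows n! <= k^(n-k) * k! * a_1! ... a_k! for positive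
   a_1 + ... + a_k = n (induction on n, decreasing the largest part). *)

section \<open>Colour-sorted labellings\<close>

definition sorted_labellings :: "'a set \<Rightarrow> ('a \<Rightarrow> nat) \<Rightarrow> ('a \<Rightarrow> nat) set" where
  "sorted_labellings V c =
     {f \<in> extensional V. bij_betw f V {1..card V} \<and> (\<forall>u\<in>V. \<forall>v\<in>V. c u < c v \<longrightarrow> f u < f v)}"

definition class_factorials :: "'a set \<Rightarrow> ('a \<Rightarrow> nat) \<Rightarrow> nat \<Rightarrow> nat" where
  "class_factorials V c K = (\<Prod>i<K. fact (card {v\<in>V. c v = i}))"

lemma finite_extensional_bijections:
  assumes "finite V" "finite B"
  shows "finite {f \<in> extensional V. bij_betw f V B \<and> P f}"
proof (rule finite_subset)
  show "{f \<in> extensional V. bij_betw f V B \<and> P f} \<subseteq> PiE V (\<lambda>_. B)"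
    unfolding PiE_def bij_betw_def by auto
  show "finite (PiE V (\<lambda>_. B))" using assms by (rule finite_PiE)
qed

lemma finite_sorted_labellings: "finite V \<Longrightarrow> finite (sorted_labellings V c)"
  unfolding sorted_labellings_def by (rule finite_extensional_bijections) auto

lemma finite_linear_extensions: "finite V \<Longrightarrow> finite (linear_extensions V D)"
  unfolding linear_extensions_def by (rule finite_extensional_bijections) auto

lemma class_factorials_remove:
  assumes "finite V" "w \<in> V" "c w < K"
  shows "class_factorials V c K = card {v\<in>V. c v = c w} * class_factorials (V - {w}) c K"
proof -
  define C where "C = {v\<in>V. c v = c w}"
  have other_classes: "(\<Prod>i\<in>{..<K} - {c w}. fact (card {v\<in>V - {w}. c v = i}))
                     = (\<Prod>i\<in>{..<K} - {c w}. fact (card {v\<in>V. c v = i}) :: nat)"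
    by (intro prod.cong refl arg_cong[where f = "\<lambda>S. fact (card S)"]) auto
  have "w \<in> C" "finite C" using assms unfolding C_def by auto
  then have "card C > 0" by (auto simp: card_gt_0_iff)
  moreover have "{v\<in>V - {w}. c v = c w} = C - {w}" unfolding C_def by auto
  ultimately have own_class: "fact (card C) = card C * (fact (card {v\<in>V - {w}. c v = c w}) :: nat)"
    using \<open>w \<in> C\<close> by (simp add: fact_reduce)
  show ?thesis
    using assms(3) own_class other_classes
    unfolding class_factorials_def C_def by (simp add: prod.remove)
qed

lemma sorted_labelling_extend:
  assumes "finite V" "w \<in> V" "\<forall>v\<in>V. c v \<le> c w" "g \<in> sorted_labellings (V - {w}) c"
  shows "g(w := card V) \<in> sorted_labellings V c"
proof -
  define n where "n = card V"
  have n_pos: "n \<ge> 1" using assms(1,2) unfolding n_def by (auto simp: Suc_le_eq card_gt_0_iff)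
  have g_ext: "g \<in> extensional (V - {w})"
    and g_bij: "bij_betw g (V - {w}) {1..n - 1}"
    and g_sorted: "\<forall>u\<in>V - {w}. \<forall>v\<in>V - {w}. c u < c v \<longrightarrow> g u < g v"
    using assms(2,4) unfolding sorted_labellings_def n_def by auto
  have "bij_betw (g(w := n)) (V - {w}) {1..n - 1}"
    using g_bij by (rule bij_betw_cong[THEN iffD1, rotated]) auto
  then have "bij_betw (g(w := n)) ((V - {w}) \<union> {w}) ({1..n - 1} \<union> {(g(w := n)) w})"
    using n_pos by (intro notIn_Un_bij_betw) auto
  moreover have "(V - {w}) \<union> {w} = V" "{1..n - 1} \<union> {(g(w := n)) w} = {1..n}"
    using assms(2) n_pos by auto
  ultimately have bij: "bij_betw (g(w := n)) V {1..n}" by simp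
  have sorted: "(g(w := n)) u < (g(w := n)) v" if "u \<in> V" "v \<in> V" "c u < c v" for u v
  proof -
    have "u \<noteq> w" using that assms(3) by force
    show ?thesis
    proof (cases "v = w")
      case True
      have "g u \<in> {1..n - 1}" using g_bij \<open>u \<noteq> w\<close> \<open>u \<in> V\<close> bij_betwE by blast
      then show ?thesis using True \<open>u \<noteq> w\<close> n_pos by auto
    next
      case False
      then show ?thesis using g_sorted that \<open>u \<noteq> w\<close> by auto
    qed
  qed
  have "g(w := n) \<in> extensional V" using g_ext assms(2) unfolding extensional_def by auto
  with bij sorted show ?thesis unfolding sorted_labellings_def n_def by auto
qed

lemma sorted_labelling_extend_inj:
  assumes "finite V" "C \<subseteq> V"
  shows "inj_on (\<lambda>(w, g). g(w := card V)) (SIGMA w:C. sorted_labellings (V - {w}) c)"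
proof (rule inj_onI, clarsimp)
  fix w1 g1 w2 g2
  assume w: "w1 \<in> C" "w2 \<in> C"
    and g1: "g1 \<in> sorted_labellings (V - {w1}) c" and g2: "g2 \<in> sorted_labellings (V - {w2}) c"
    and eq: "g1(w1 := card V) = g2(w2 := card V)"
  have card_minus: "card (V - {w}) = card V - 1" if "w \<in> V" for w
    using that assms(1) by simp
  have "w1 = w2"
  proof (rule ccontr)
    assume "w1 \<noteq> w2"
    have "bij_betw g2 (V - {w2}) {1..card V - 1}"
      using g2 w assms(2) card_minus[of w2] unfolding sorted_labellings_def by auto
    then have "g2 w1 \<in> {1..card V - 1}"
      using \<open>w1 \<noteq> w2\<close> w assms(2) bij_betwE by blast
    moreover have "g2 w1 = card V" using fun_cong[OF eq, of w1] \<open>w1 \<noteq> w2\<close> by simp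
    ultimately show False by auto
  qed
  moreover have "g1 = g2"
  proof
    fix z
    show "g1 z = g2 z"
    proof (cases "z = w1")
      case True
      have "g1 \<in> extensional (V - {w1})" "g2 \<in> extensional (V - {w2})"
        using g1 g2 unfolding sorted_labellings_def by auto
      then show ?thesis using True \<open>w1 = w2\<close> unfolding extensional_def by auto
    qed (use fun_cong[OF eq, of z] \<open>w1 = w2\<close> in auto)
  qed
  ultimately show "w1 = w2 \<and> g1 = g2" by simp
qed

text \<open>With C the top colour class, |C| * prod(V) = sum over w in C of |C| * prod(V - {w}),
  and by induction and the injective extension map this is at most |C| times the count.\<close>

lemma class_factorials_le_sorted_labellings:
  assumes "finite V" "\<forall>v\<in>V. c v < K"
  shows "class_factorials V c K \<le> card (sorted_labellings V c)"
  using assms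
proof (induction V rule: finite_remove_induct)
  case empty
  have "sorted_labellings {} c = {\<lambda>_. undefined}"
    unfolding sorted_labellings_def by (auto simp: bij_betw_def)
  then show ?case by (simp add: class_factorials_def)
next
  case (remove V)
  define C where "C = {v\<in>V. c v = Max (c ` V)}"
  have top: "\<forall>v\<in>V. c v \<le> c w" if "w \<in> C" for w
    using that remove.hyps(1) unfolding C_def by auto
  have "Max (c ` V) \<in> c ` V" using remove.hyps by simp
  then have "C \<noteq> {}" "finite C" "C \<subseteq> V" using remove.hyps(1) unfolding C_def by auto
  have split: "class_factorials V c K = card C * class_factorials (V - {w}) c K" if "w \<in> C" for w
    using class_factorials_remove[of V w c K] that remove.hyps(1) remove.prems
    unfolding C_def by auto
  have "card C * class_factorials V c K = (\<Sum>w\<in>C. class_factorials V c K)" by simp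
  also have "\<dots> = (\<Sum>w\<in>C. card C * class_factorials (V - {w}) c K)"
    using split by (rule sum.cong[OF refl])
  also have "\<dots> \<le> (\<Sum>w\<in>C. card C * card (sorted_labellings (V - {w}) c))"
    using remove.IH remove.prems \<open>C \<subseteq> V\<close> by (intro sum_mono mult_le_mono2) blast
  also have "\<dots> = card C * card (SIGMA w:C. sorted_labellings (V - {w}) c)"
    using \<open>finite C\<close> remove.hyps(1) by (simp add: finite_sorted_labellings sum_distrib_left)
  also have "\<dots> \<le> card C * card (sorted_labellings V c)"
  proof (intro mult_le_mono2 card_inj_on_le)
    show "inj_on (\<lambda>(w, g). g(w := card V)) (SIGMA w:C. sorted_labellings (V - {w}) c)"
      using remove.hyps(1) \<open>C \<subseteq> V\<close> by (rule sorted_labelling_extend_inj)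
    show "(\<lambda>(w, g). g(w := card V)) ` (SIGMA w:C. sorted_labellings (V - {w}) c)
          \<subseteq> sorted_labellings V c"
      using sorted_labelling_extend[OF remove.hyps(1)] top \<open>C \<subseteq> V\<close> by auto
    show "finite (sorted_labellings V c)" using remove.hyps(1) by (rule finite_sorted_labellings)
  qed
  finally show ?case using \<open>C \<noteq> {}\<close> \<open>finite C\<close> by (simp add: card_gt_0_iff)
qed

section \<open>An inequality for factorials of a composition\<close>

lemma prod_fact_decrement:
  fixes a :: "'b \<Rightarrow> nat"
  assumes "finite I" "j \<in> I" "a j \<ge> 1"
  shows "(\<Prod>i\<in>I. fact (a i) :: nat) = a j * (\<Prod>i\<in>I. fact ((a(j := a j - 1)) i))"
proof -
  have "(\<Prod>i\<in>I - {j}. fact ((a(j := a j - 1)) i)) = (\<Prod>i\<in>I - {j}. fact (a i) :: nat)"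
    by (intro prod.cong) auto
  moreover have "fact (a j) = a j * (fact (a j - 1) :: nat)"
    using assms(3) by (simp add: fact_reduce)
  ultimately show ?thesis using assms(1,2) by (simp add: prod.remove)
qed

text \<open>In the
  induction step the largest part a_j (>= 2 unless all parts are 1) is lowered; this costs a
  factor n <= k a_j on the left and exactly a_j on the right.\<close>

lemma fact_le_composition_bound:
  fixes a :: "'b \<Rightarrow> nat"
  assumes "finite I" "\<forall>i\<in>I. a i \<ge> 1" "sum a I = n"
  shows "fact n \<le> card I ^ (n - card I) * fact (card I) * (\<Prod>i\<in>I. fact (a i) :: nat)"
  using assms
proof (induction n arbitrary: a)
  case 0
  then have "I = {}" by fastforce
  then show ?case by simp
next
  case (Suc m)
  define k where "k = card I"
  have "I \<noteq> {}" using Suc.prems(1,3) by auto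
  then have "Max (a ` I) \<in> a ` I" using Suc.prems(1) by simp
  then obtain j where j: "j \<in> I" "a j = Max (a ` I)" by (metis imageE)
  have j_max: "\<forall>i\<in>I. a i \<le> a j" using j Suc.prems(1) by simp
  show ?case
  proof (cases "a j \<ge> 2")
    case False
    then have "\<forall>i\<in>I. a i = 1" using j_max Suc.prems(2) by force
    then have "card I = Suc m" using Suc.prems(3) by simp
    then show ?thesis using \<open>\<forall>i\<in>I. a i = 1\<close> by simp
  next
    case True
    define a' where "a' = a(j := a j - 1)"
    have "sum a I = a j + sum a (I - {j})" "sum a' I = a' j + sum a' (I - {j})"
      using j Suc.prems(1) by (simp_all add: sum.remove)
    moreover have "sum a' (I - {j}) = sum a (I - {j})" unfolding a'_def by (intro sum.cong) auto
    ultimately have "sum a' I = m" using Suc.prems(3) True by (simp add: a'_def)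
    moreover have "\<forall>i\<in>I. a' i \<ge> 1" using Suc.prems(2) True by (auto simp add: a'_def)
    ultimately have IH: "fact m \<le> k ^ (m - k) * fact k * (\<Prod>i\<in>I. fact (a' i) :: nat)"
      using Suc.IH[OF Suc.prems(1)] unfolding k_def by blast
    have "sum (\<lambda>_. 1) I < sum a I"
      using Suc.prems(1,2) j(1) True by (intro sum_strict_mono_ex1) (auto intro!: bexI[of _ j])
    then have "k \<le> m" using Suc.prems(3) by (simp add: k_def)
    have "Suc m \<le> k * a j"
      using sum_bounded_above[of I a "a j"] j_max Suc.prems(3) by (simp add: k_def)
    have "fact (Suc m) = Suc m * (fact m :: nat)" by simp
    also have "\<dots> \<le> (k * a j) * (k ^ (m - k) * fact k * (\<Prod>i\<in>I. fact (a' i)))"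
      using \<open>Suc m \<le> k * a j\<close> IH by (rule mult_le_mono)
    also have "\<dots> = k ^ (Suc m - k) * fact k * (a j * (\<Prod>i\<in>I. fact (a' i)))"
      using \<open>k \<le> m\<close> by (simp add: Suc_diff_le algebra_simps)
    also have "a j * (\<Prod>i\<in>I. fact (a' i)) = (\<Prod>i\<in>I. fact (a i))"
      using prod_fact_decrement[OF Suc.prems(1) j(1)] True unfolding a'_def by simp
    finally show ?thesis unfolding k_def .
  qed
qed

section \<open>Colourings and the colour orientation\<close>

text \<open>A graph has a proper colouring with chi(G) colours (the LEAST in the definition is
  attained, since numbering the vertices injectively is a proper colouring).\<close>

lemma chromatic_colouring_exists:
  assumes "simple_graph V E"
  obtains c where "proper_colouring V E (chromatic_number V E) c"
proof -
  have fin: "finite V" and EV: "E \<subseteq> V \<times> V" and irr: "irrefl E"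
    using assms unfolding simple_graph_def by auto
  obtain h where h: "bij_betw h V {0..<card V}" using ex_bij_betw_finite_nat[OF fin] by blast
  have "proper_colouring V E (card V) h"
    unfolding proper_colouring_def
  proof (intro conjI ballI)
    show "h v < card V" if "v \<in> V" for v using bij_betwE[OF h] that by auto
    show "case e of (u, v) \<Rightarrow> h u \<noteq> h v" if "e \<in> E" for e
    proof (cases e)
      case (Pair u v)
      then have "u \<in> V" "v \<in> V" "u \<noteq> v" using that EV irr unfolding irrefl_def by auto
      then have "h u \<noteq> h v" using bij_betw_imp_inj_on[OF h] unfolding inj_on_def by blast
      then show ?thesis using Pair by simp
    qed
  qed
  then have "\<exists>c. proper_colouring V E (chromatic_number V E) c"
    using LeastI_ex[of "\<lambda>k. \<exists>c. proper_colouring V E k c"]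
    unfolding chromatic_number_def by blast
  then show ?thesis using that by blast
qed

text \<open>In a colouring with chi(G) colours every colour is used: otherwise shifting the colours
  above an unused one down by one would give a proper colouring with fewer colours.\<close>

lemma chromatic_colouring_onto:
  assumes "proper_colouring V E (chromatic_number V E) c" "E \<subseteq> V \<times> V"
    and "i < chromatic_number V E"
  shows "\<exists>v\<in>V. c v = i"
proof (rule ccontr)
  assume unused: "\<not> (\<exists>v\<in>V. c v = i)"
  define c' where "c' = (\<lambda>v. if c v > i then c v - 1 else c v)"
  have "proper_colouring V E (chromatic_number V E - 1) c'"
    unfolding proper_colouring_def
  proof (intro conjI ballI)
    show "c' v < chromatic_number V E - 1" if "v \<in> V" for v
    proof -
      have "c v < chromatic_number V E" "c v \<noteq> i"
        using that assms(1) unused unfolding proper_colouring_def by auto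
      then show ?thesis using assms(3) unfolding c'_def by auto
    qed
    show "case e of (u, v) \<Rightarrow> c' u \<noteq> c' v" if "e \<in> E" for e
    proof (cases e)
      case (Pair u v)
      then have "c u \<noteq> c v" "c u \<noteq> i" "c v \<noteq> i"
        using that assms(1,2) unused unfolding proper_colouring_def by auto
      then show ?thesis using Pair unfolding c'_def by auto
    qed
  qed
  then have "chromatic_number V E \<le> chromatic_number V E - 1"
    unfolding chromatic_number_def by (intro Least_le) blast
  then show False using assms(3) by simp
qed

lemma sum_colour_class_sizes:
  fixes c :: "'a \<Rightarrow> nat"
  assumes "finite V" "\<forall>v\<in>V. c v < K"
  shows "(\<Sum>i<K. card {v\<in>V. c v = i}) = card V"
proof -
  have "c ` V \<subseteq> {..<K}" using assms(2) by auto
  with sum.group[OF assms(1) finite_lessThan, where h = "\<lambda>_. 1 :: nat"] show ?thesis by simp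
qed

definition colour_orientation :: "('a \<times> 'a) set \<Rightarrow> ('a \<Rightarrow> nat) \<Rightarrow> ('a \<times> 'a) set" where
  "colour_orientation E c = {(u, v) \<in> E. c u < c v}"

lemma colour_orientation_path:
  assumes "(u, v) \<in> (colour_orientation E c)\<^sup>+"
  shows "c u < c v"
  using assms unfolding colour_orientation_def by (induction rule: trancl_induct) auto

lemma colour_orientation_acyclic:
  assumes "sym E" "\<forall>(u, v)\<in>E. c u \<noteq> c v"
  shows "acyclic_orientation E (colour_orientation E c)"
  unfolding acyclic_orientation_def
proof (intro conjI)
  show "colour_orientation E c \<subseteq> E" unfolding colour_orientation_def by auto
  have "((u, v) \<in> colour_orientation E c) \<noteq> ((v, u) \<in> colour_orientation E c)"
    if "(u, v) \<in> E" for u v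
  proof -
    have "(v, u) \<in> E" "c u \<noteq> c v" using that assms unfolding sym_def by auto
    then show ?thesis using that unfolding colour_orientation_def by auto
  qed
  then show "\<forall>(u, v)\<in>E. ((u, v) \<in> colour_orientation E c) \<noteq> ((v, u) \<in> colour_orientation E c)"
    by blast
  show "acyclic (colour_orientation E c)"
    unfolding acyclic_def by (meson colour_orientation_path less_irrefl)
qed

lemma sorted_labellings_subset_linear_extensions:
  "sorted_labellings V c \<subseteq> linear_extensions V (colour_orientation E c)"
proof
  fix f assume "f \<in> sorted_labellings V c"
  then have "f \<in> extensional V" "bij_betw f V {1..card V}"
    and sorted: "\<forall>u\<in>V. \<forall>v\<in>V. c u < c v \<longrightarrow> f u < f v"
    unfolding sorted_labellings_def by auto
  moreover have "\<forall>u\<in>V. \<forall>v\<in>V. (u, v) \<in> (colour_orientation E c)\<^sup>+ \<longrightarrow> f u < f v"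
  proof (intro ballI impI)
    fix u v assume "u \<in> V" "v \<in> V" "(u, v) \<in> (colour_orientation E c)\<^sup>+"
    then show "f u < f v" using sorted colour_orientation_path[of u v E c] by simp
  qed
  ultimately show "f \<in> linear_extensions V (colour_orientation E c)"
    unfolding linear_extensions_def by simp
qed

text \<open>eps(G) dominates the number of linear extensions of every acyclic orientation; the
  maximum is over a finite set because orientations are subsets of the finite set E.\<close>

lemma linear_extensions_le_eps:
  assumes "simple_graph V E" "acyclic_orientation E D"
  shows "card (linear_extensions V D) \<le> eps V E"
proof -
  have "finite E"
    using assms(1) unfolding simple_graph_def by (meson finite_SigmaI finite_subset)
  moreover have "{card (linear_extensions V D) | D. acyclic_orientation E D}
                 \<subseteq> (\<lambda>D. card (linear_extensions V D)) ` Pow E"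
    unfolding acyclic_orientation_def by auto
  ultimately have "finite {card (linear_extensions V D) | D. acyclic_orientation E D}"
    by (meson finite_Pow_iff finite_imageI finite_subset)
  then show ?thesis unfolding eps_def using assms(2) by (intro Max_ge) auto
qed

lemma of_nat_div_le_of_nat:
  assumes "x \<le> d * e"
  shows "real x / real d \<le> real e"
proof (cases "d = 0")
  case False
  have "real x \<le> real e * real d"
    using assms by (metis mult.commute of_nat_le_iff of_nat_mult)
  then show ?thesis using False by (simp add: pos_divide_le_eq)
qed simp

theorem corollary4p4:
  fixes V :: "'a set" and E :: "('a \<times> 'a) set"
  assumes "simple_graph V E"
  shows "real (eps V E) \<ge>
    fact (card V) / (real (chromatic_number V E) ^ (card V - chromatic_number V E)
                     * fact (chromatic_number V E))"
proof -
  define k where "k = chromatic_number V E"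
  have fin: "finite V" and EV: "E \<subseteq> V \<times> V" and "sym E"
    using assms unfolding simple_graph_def by auto
  obtain c where c: "proper_colouring V E k c"
    using chromatic_colouring_exists[OF assms] unfolding k_def by blast
  have c_range: "\<forall>v\<in>V. c v < k" and c_proper: "\<forall>(u, v)\<in>E. c u \<noteq> c v"
    using c unfolding proper_colouring_def by auto
  have "class_factorials V c k \<le> card (sorted_labellings V c)"
    using fin c_range by (rule class_factorials_le_sorted_labellings)
  also have "\<dots> \<le> card (linear_extensions V (colour_orientation E c))"
    using finite_linear_extensions[OF fin] sorted_labellings_subset_linear_extensions
    by (rule card_mono)
  also have "\<dots> \<le> eps V E"
    using assms colour_orientation_acyclic[OF \<open>sym E\<close> c_proper] by (rule linear_extensions_le_eps)
  finally have classes_le_eps: "class_factorials V c k \<le> eps V E" .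
  have classes_nonempty: "\<forall>i\<in>{..<k}. card {v\<in>V. c v = i} \<ge> 1"
  proof
    fix i assume "i \<in> {..<k}"
    then obtain v where "v \<in> V" "c v = i"
      using chromatic_colouring_onto[OF c[unfolded k_def] EV] unfolding k_def by auto
    then show "card {v\<in>V. c v = i} \<ge> 1" using fin by (auto simp: Suc_le_eq card_gt_0_iff)
  qed
  have "fact (card V) \<le> k ^ (card V - k) * fact k * class_factorials V c k"
    using fact_le_composition_bound[OF finite_lessThan classes_nonempty
        sum_colour_class_sizes[OF fin c_range]]
    by (simp add: class_factorials_def)
  also have "\<dots> \<le> k ^ (card V - k) * fact k * eps V E" using classes_le_eps by simp
  finally have "real (fact (card V)) / real (k ^ (card V - k) * fact k) \<le> real (eps V E)"
    by (rule of_nat_div_le_of_nat)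
  then show ?thesis unfolding k_def by (simp add: of_nat_fact)
qed

end
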